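(* Assume (A1)–(A6), and let $u^*(r)=u^*_{\lambda^*}(r(\lambda^* )^{-1/\theta})$, where $(u^*_{\lambda^*},\lambda^* )$ is the singular solution of Theorem 1.1 (so $u^*$ is a singular solution of $L(u)+e^{f(u)}=0$). Then $$u^*(r)=\mathcal F^{-1}\big(K r^{\theta/(\beta+1)}(1+\delta(r))\big),\qquad K=\frac{\beta+1}{\theta}(\alpha-\beta-1)^{-\frac{1}{\beta+1}},$$ where $\delta(r)\to0$ as $r\to0^+$.
   Context: $L(u)(r)=r^{-\gamma}(r^{\alpha}|u'|^{\beta}u')'$, $\theta=\gamma+2+\beta-\alpha$, $g=f^{-1}$, $\mathcal F(u)=\int_u^{\infty}e^{-f(s)/(\beta+1)}ds$ (finite and strictly decreasing under the assumptions). "$O(g''(t))$" means bounded by $C|g''(t)|$ for large $t$, $o(t)$ any $h$ with $h/t\to0$. (A1) $f\in C^4([0,\infty))$, $f'>0$, $f\to+\infty$. (A2) $g''(t)\to0$ and $f(g(t)+\varepsilon(t))/t\to1$ for every $\varepsilon(t)=O(g''(t))$. (A3) $g'(t)/g'(t+h(t))\to1$ for $h=o(t)$. (A4) $\frac{g''(t)}{g'(t)}\ln g'(t)\to0$. (A5)(a) $g'''(\ln g')^n=O(g'')$, $n=0,1,2$, $g^{(4)}\ln g'=O(g'')$; (b) $\sup_{s\ge t}|g''(s)|=O(g''(t))$, $g''(t+h(t))=O(g''(t))$ for $h=o(t)$. (A6) $\alpha>\beta+1$, $\beta\ge0$, $\theta>0$. Theorem 1.1: there exist $\lambda^*>0$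 and $u^*_{\lambda^*}\in C^2((0,1])$ with $L(u)+\lambda^*e^{f(u)}=0$ on $(0,1)$, $u(1)=0$, $u(r)\to+\infty$ as $r\to0^+$, and $u^*_{\lambda^*}(r)=g(Z(r))+O(g''(\ln r^{-\theta}))$, $Z(r)=\ln\{\theta^{\beta+1}(\alpha-\beta-1)\}-\ln\lambda^*-\theta\ln r+(\beta+1)\ln\{g'(\tau)+(\beta+1)g''(\tau)\ln g'(\tau)\}$, $\tau=\ln\frac{\beta+1}{\lambda^*r^\theta}$. *)

theory Defs
  imports "HOL-Analysis.Analysis" "HOL-Library.Landau_Symbols"
begin

definition C_n_on :: "nat \<Rightarrow> real set \<Rightarrow> (real \<Rightarrow> real) \<Rightarrow> (nat \<Rightarrow> real \<Rightarrow> real) \<Rightarrow> bool" where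
  "C_n_on n S f D \<longleftrightarrow> D 0 = f \<and>
     (\<forall>k<n. \<forall>x\<in>S. (D k has_real_derivative D (Suc k) x) (at x within S)) \<and>
     continuous_on S (D n)"

definition ginv :: "(real \<Rightarrow> real) \<Rightarrow> real \<Rightarrow> real" where
  "ginv f = the_inv_into {0..} f"

definition gd :: "(real \<Rightarrow> real) \<Rightarrow> nat \<Rightarrow> real \<Rightarrow> real" where
  "gd f k = (deriv ^^ k) (ginv f)"

definition Fcal :: "(real \<Rightarrow> real) \<Rightarrow> real \<Rightarrow> real \<Rightarrow> real" where
  "Fcal f \<beta> u = (LINT s:{u..}|lborel. exp (- f s / (\<beta> + 1)))"

definition Lop :: "real \<Rightarrow> real \<Rightarrow> real \<Rightarrow> (real \<Rightarrow> real) \<Rightarrow> real \<Rightarrow> real" where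
  "Lop \<alpha> \<beta> \<gamma> u r = r powr (- \<gamma>) *
     deriv (\<lambda>s. s powr \<alpha> * \<bar>deriv u s\<bar> powr \<beta> * deriv u s) r"

definition theta :: "real \<Rightarrow> real \<Rightarrow> real \<Rightarrow> real" where
  "theta \<alpha> \<beta> \<gamma> = \<gamma> + 2 + \<beta> - \<alpha>"

definition assumptions_A :: "(real \<Rightarrow> real) \<Rightarrow> real \<Rightarrow> real \<Rightarrow> real \<Rightarrow> bool" where
  "assumptions_A f \<alpha> \<beta> \<gamma> \<longleftrightarrow>
    \<comment> \<open>(A1)\<close>
    (\<exists>D. C_n_on 4 {0..} f D \<and> (\<forall>x\<ge>0. D 1 x > 0)) \<and> filterlim f at_top at_top \<and>
    \<comment> \<open>(A2)\<close>
    (gd f 2 \<longlongrightarrow> 0) at_top \<and>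
    (\<forall>\<epsilon>. \<epsilon> \<in> O[at_top](gd f 2) \<longrightarrow>
        ((\<lambda>t. f (ginv f t + \<epsilon> t) / t) \<longlongrightarrow> 1) at_top) \<and>
    \<comment> \<open>(A3)\<close>
    (\<forall>h. h \<in> o[at_top](\<lambda>t. t) \<longrightarrow>
        ((\<lambda>t. gd f 1 t / gd f 1 (t + h t)) \<longlongrightarrow> 1) at_top) \<and>
    \<comment> \<open>(A4)\<close>
    ((\<lambda>t. gd f 2 t / gd f 1 t * ln (gd f 1 t)) \<longlongrightarrow> 0) at_top \<and>
    \<comment> \<open>(A5)(a)\<close>
    (\<forall>n::nat. n \<le> 2 \<longrightarrow> (\<lambda>t. gd f 3 t * (ln (gd f 1 t)) ^ n) \<in> O[at_top](gd f 2)) \<and>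
    (\<lambda>t. gd f 4 t * ln (gd f 1 t)) \<in> O[at_top](gd f 2) \<and>
    \<comment> \<open>(A5)(b)\<close>
    (\<lambda>t. Sup {\<bar>gd f 2 s\<bar> | s. s \<ge> t}) \<in> O[at_top](gd f 2) \<and>
    (\<forall>h. h \<in> o[at_top](\<lambda>t. t) \<longrightarrow> (\<lambda>t. gd f 2 (t + h t)) \<in> O[at_top](gd f 2)) \<and>
    \<comment> \<open>(A6)\<close>
    \<alpha> > \<beta> + 1 \<and> \<beta> \<ge> 0 \<and> theta \<alpha> \<beta> \<gamma> > 0"

definition Zfun :: "(real \<Rightarrow> real) \<Rightarrow> real \<Rightarrow> real \<Rightarrow> real \<Rightarrow> real \<Rightarrow> real \<Rightarrow> real" where
  "Zfun f \<alpha> \<beta> \<gamma> lam r =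
    (let \<theta> = theta \<alpha> \<beta> \<gamma>; \<tau> = ln ((\<beta> + 1) / (lam * r powr \<theta>)) in
     ln (\<theta> powr (\<beta> + 1) * (\<alpha> - \<beta> - 1)) - ln lam - \<theta> * ln r
       + (\<beta> + 1) * ln (gd f 1 \<tau> + (\<beta> + 1) * gd f 2 \<tau> * ln (gd f 1 \<tau>)))"

definition singular_solution_thm11 ::
  "(real \<Rightarrow> real) \<Rightarrow> real \<Rightarrow> real \<Rightarrow> real \<Rightarrow> real \<Rightarrow> (real \<Rightarrow> real) \<Rightarrow> bool" where
  "singular_solution_thm11 f \<alpha> \<beta> \<gamma> lam u \<longleftrightarrow>
    lam > 0 \<and>
    (\<exists>D. C_n_on 2 {0<..1} u D) \<and>
    (\<forall>r\<in>{0<..<1}.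
       (\<lambda>s. s powr \<alpha> * \<bar>deriv u s\<bar> powr \<beta> * deriv u s) differentiable (at r) \<and>
       Lop \<alpha> \<beta> \<gamma> u r + lam * exp (f (u r)) = 0) \<and>
    u 1 = 0 \<and>
    filterlim u at_top (at_right 0) \<and>
    (\<lambda>r. u r - ginv f (Zfun f \<alpha> \<beta> \<gamma> lam r))
       \<in> O[at_right 0](\<lambda>r. gd f 2 (ln (r powr (- theta \<alpha> \<beta> \<gamma>))))"

end

(*
  With g = f^-1 and tau = ln ((beta+1) / (lambda r^theta)), Theorem 1.1 gives
  u = g(Z) + O(g''(tau)) with Z = tau + A + (beta+1) ln (g'(tau) (1 + o(1))) for a constant A.
  Since g'' = o(g') and ln g' is eventually 1-Lipschitz, g' is essentially constant on unit
  intervals, so the error O(g''(tau)) in u is an error o(1) in f(u): f(u) = Z + o(1).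
  One integration by parts gives F(x) ~ (beta+1) e^(-f(x)/(beta+1)) g'(f(x)), because
  f''/f'^2 = -(g''/g') o f tends to 0. Inserting x = u, f(u) = Z + o(1) and g'(Z) ~ g'(tau)
  (from (A3), as Z - tau = o(tau)), the factor g'(tau) cancels against the ln g'(tau) in Z,
  leaving F(u) ~ K r^(theta/(beta+1)) for the rescaled radius r. As F is strictly decreasing
  on [0, oo), u = F^-1 (K r^(theta/(beta+1)) (1 + delta)) with delta -> 0.
*)

theory Submission
  imports Defs "HOL-Real_Asymp.Real_Asymp"
begin

lemma has_real_derivative_at_of_within_atLeast:
  assumes "(h has_real_derivative d) (at x within {a..})" and "a < x"
  shows "(h has_real_derivative d) (at x)"
proof -
  have "(h has_real_derivative d) (at x within {a<..})"
    using assms(1) by (rule has_field_derivative_subset) auto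
  then show ?thesis
    using at_within_open[of x "{a<..}"] assms(2) by simp
qed

lemma diff_ge_of_deriv_ge:
  fixes \<phi> \<phi>' :: "real \<Rightarrow> real"
  assumes "a \<le> b"
    and deriv: "\<And>s. a \<le> s \<Longrightarrow> s \<le> b \<Longrightarrow> (\<phi> has_real_derivative \<phi>' s) (at s)"
    and bound: "\<And>s. a \<le> s \<Longrightarrow> s \<le> b \<Longrightarrow> \<phi>' s \<ge> c"
  shows "\<phi> b - \<phi> a \<ge> c * (b - a)"
proof (cases "a = b")
  case False
  then have "a < b"
    using \<open>a \<le> b\<close> by simp
  then obtain z where "a < z" "z < b" "\<phi> b - \<phi> a = (b - a) * \<phi>' z"
    using MVT2[OF _ deriv] by blast
  then show ?thesis
    using bound[of z] \<open>a < b\<close> by (simp add: mult.commute mult_right_mono)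
qed simp

lemma exp_minus_one_ge_third: "exp (-1::real) \<ge> 1/3"
  using exp_le by (simp add: exp_minus field_simps)

lemma abs_div_le_abs_div_mult_ln:
  fixes a b :: real
  assumes "b > 0"
  shows "\<bar>a / b\<bar> \<le> \<bar>a / b * ln b\<bar> + 3 * \<bar>a\<bar>"
proof (cases "\<bar>ln b\<bar> \<ge> 1")
  case True
  then have "\<bar>a / b\<bar> * 1 \<le> \<bar>a / b\<bar> * \<bar>ln b\<bar>"
    by (intro mult_left_mono) auto
  then have "\<bar>a / b\<bar> \<le> \<bar>a / b * ln b\<bar>" by (simp add: abs_mult)
  then show ?thesis by linarith
next
  case False
  then have "-1 < ln b" by linarith
  then have "exp (-1) < b"
    using assms by (metis exp_less_cancel_iff exp_ln)
  moreover note exp_minus_one_ge_third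
  ultimately have "\<bar>a\<bar> * 1 \<le> \<bar>a\<bar> * (3 * b)"
    by (intro mult_left_mono) auto
  then have "\<bar>a / b\<bar> \<le> 3 * \<bar>a\<bar>"
    using assms by (simp add: abs_div divide_le_eq mult.commute mult.left_commute)
  then show ?thesis by linarith
qed

lemma tendsto_0_of_div_mult_ln_tendsto_0:
  fixes a b :: "'a \<Rightarrow> real"
  assumes a: "(a \<longlongrightarrow> 0) F" and ab: "((\<lambda>x. a x / b x * ln (b x)) \<longlongrightarrow> 0) F"
    and b: "\<forall>\<^sub>F x in F. b x > 0"
  shows "((\<lambda>x. a x / b x) \<longlongrightarrow> 0) F"
proof (rule tendsto_0_le)
  show "((\<lambda>x. \<bar>a x / b x * ln (b x)\<bar> + 3 * \<bar>a x\<bar>) \<longlongrightarrow> 0) F"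
    using tendsto_add[OF tendsto_rabs_zero[OF ab] tendsto_mult_right_zero[OF tendsto_rabs_zero[OF a], of 3]]
    by simp
  show "\<forall>\<^sub>F x in F. norm (a x / b x) \<le> norm (\<bar>a x / b x * ln (b x)\<bar> + 3 * \<bar>a x\<bar>) * 1"
    using b
  proof eventually_elim
    case (elim x)
    show ?case
      using abs_div_le_abs_div_mult_ln[OF elim, of "a x"] by simp
  qed
qed

section \<open>Asymptotics of tail integrals\<close>

lemma set_integral_greaterThan_eq_of_deriv:
  fixes k G :: "real \<Rightarrow> real"
  assumes deriv: "\<And>s. s > x \<Longrightarrow> (G has_real_derivative - k s) (at s)"
    and cont: "\<And>s. s > x \<Longrightarrow> isCont k s"
    and nonneg: "\<And>s. s > x \<Longrightarrow> k s \<ge> 0"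
    and "isCont G x" and G_lim: "(G \<longlongrightarrow> 0) at_top"
  shows "set_integrable lborel {x<..} k" and "(LINT s:{x<..}|lborel. k s) = G x"
proof -
  have at_x: "(((\<lambda>s. - G s) \<circ> real_of_ereal) \<longlongrightarrow> - G x) (at_right (ereal x))"
  proof -
    have "(G \<longlongrightarrow> G x) (at_right x)"
      using \<open>isCont G x\<close> by (simp add: isCont_def filterlim_at_split)
    then show ?thesis
      by (simp add: ereal_tendsto_simps1 tendsto_minus)
  qed
  have at_infty: "(((\<lambda>s. - G s) \<circ> real_of_ereal) \<longlongrightarrow> 0) (at_left \<infinity>)"
    using tendsto_minus[OF G_lim] by (simp add: ereal_tendsto_simps1)
  have D: "((\<lambda>s. - G s) has_real_derivative k s) (at s)" if "ereal x < ereal s" for s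
    using DERIV_minus[OF deriv] that by simp
  have C: "isCont k s" if "ereal x < ereal s" for s
    using cont that by simp
  have N: "AE s in lborel. ereal x < ereal s \<longrightarrow> ereal s < \<infinity> \<longrightarrow> 0 \<le> k s"
    by (rule AE_I2) (simp add: nonneg)
  note FTC = interval_integral_FTC_nonneg[OF _ D C N at_x at_infty]
  show "set_integrable lborel {x<..} k"
    using FTC(1) by simp
  show "(LINT s:{x<..}|lborel. k s) = G x"
    using FTC(2) by (simp add: interval_lebesgue_integral_def)
qed

lemma set_integrable_atLeast_iff_greaterThan:
  fixes f :: "real \<Rightarrow> real"
  shows "set_integrable lborel {x..} f \<longleftrightarrow> set_integrable lborel {x<..} f"
  by (rule set_integrable_discrete_difference[where X="{x}"]) auto

lemma set_integral_atLeast_eq_greaterThan: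
  fixes f :: "real \<Rightarrow> real"
  shows "(LINT s:{x..}|lborel. f s) = (LINT s:{x<..}|lborel. f s)"
  by (rule set_integral_discrete_difference[where X="{x}"]) auto

lemma tail_integral_ratio_bound:
  fixes e w G :: "real \<Rightarrow> real"
  assumes deriv: "\<And>s. s > x \<Longrightarrow> (G has_real_derivative - (e s * (1 + w s))) (at s)"
    and e_cont: "\<And>s. s > x \<Longrightarrow> isCont e s" and w_cont: "\<And>s. s > x \<Longrightarrow> isCont w s"
    and e_pos: "\<And>s. s > x \<Longrightarrow> e s > 0"
    and "isCont G x" and G_pos: "G x > 0" and "(G \<longlongrightarrow> 0) at_top"
    and w_small: "\<And>s. s > x \<Longrightarrow> \<bar>w s\<bar> \<le> \<eta>" and "\<eta> < 1"
  shows "set_integrable lborel {x<..} e"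
    and "\<bar>G x / (LINT s:{x<..}|lborel. e s) - 1\<bar> \<le> \<eta>"
proof -
  have lower: "(1 - \<eta>) * e s \<le> e s * (1 + w s)" and upper: "e s * (1 + w s) \<le> (1 + \<eta>) * e s"
    if "s > x" for s
  proof -
    have "1 - \<eta> \<le> 1 + w s" "1 + w s \<le> 1 + \<eta>"
      using w_small[OF that] by auto
    then show "(1 - \<eta>) * e s \<le> e s * (1 + w s)" "e s * (1 + w s) \<le> (1 + \<eta>) * e s"
      using e_pos[OF that] by (simp_all add: mult.commute)
  qed
  have "(1 - \<eta>) * e s \<ge> 0" if "s > x" for s
    using e_pos[OF that] \<open>\<eta> < 1\<close> by simp
  then have k: "set_integrable lborel {x<..} (\<lambda>s. e s * (1 + w s))"
      "(LINT s:{x<..}|lborel. e s * (1 + w s)) = G x"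
    using set_integral_greaterThan_eq_of_deriv[of x G "\<lambda>s. e s * (1 + w s)"]
      deriv e_cont w_cont lower \<open>isCont G x\<close> \<open>(G \<longlongrightarrow> 0) at_top\<close>
    by (auto intro!: continuous_intros order_trans[OF _ lower])
  have e_meas: "set_borel_measurable lborel {x<..} e"
  proof -
    have "continuous_on {x<..} e"
      using e_cont by (simp add: continuous_at_imp_continuous_on)
    then show ?thesis
      using set_measurable_continuous_on[of "{x<..}" e] by (simp add: set_borel_measurable_def)
  qed
  show e_int: "set_integrable lborel {x<..} e"
  proof (rule set_integrable_bound[OF _ e_meas])
    show "set_integrable lborel {x<..} (\<lambda>s. e s * (1 + w s) / (1 - \<eta>))"
      using k(1) by simp
    show "AE s in lborel. s \<in> {x<..} \<longrightarrow> norm (e s) \<le> norm (e s * (1 + w s) / (1 - \<eta>))"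
    proof (rule AE_I2, intro impI)
      fix s assume "s \<in> {x<..}"
      then show "norm (e s) \<le> norm (e s * (1 + w s) / (1 - \<eta>))"
        using lower[of s] e_pos[of s] \<open>\<eta> < 1\<close> by (simp add: field_simps)
    qed
  qed
  define I where "I = (LINT s:{x<..}|lborel. e s)"
  have "(1 - \<eta>) * I \<le> G x"
    unfolding I_def k(2)[symmetric] set_integral_mult_right[symmetric]
    by (rule set_integral_mono) (use e_int k(1) lower in auto)
  moreover have upper_I: "G x \<le> (1 + \<eta>) * I"
    unfolding I_def k(2)[symmetric] set_integral_mult_right[symmetric]
    by (rule set_integral_mono) (use e_int k(1) upper in auto)
  moreover have "I > 0"
  proof -
    have "\<eta> \<ge> 0"
      using w_small[of "x + 1"] by simp
    moreover have "0 < (1 + \<eta>) * I"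
      using G_pos upper_I by linarith
    ultimately show ?thesis
      by (simp add: zero_less_mult_iff)
  qed
  ultimately show "\<bar>G x / I - 1\<bar> \<le> \<eta>"
    by (simp add: abs_le_iff field_simps)
qed

lemma tail_integral_asymp:
  fixes e w G :: "real \<Rightarrow> real"
  assumes deriv: "\<And>s. s > a \<Longrightarrow> (G has_real_derivative - (e s * (1 + w s))) (at s)"
    and e_cont: "\<And>s. s > a \<Longrightarrow> isCont e s" and w_cont: "\<And>s. s > a \<Longrightarrow> isCont w s"
    and e_pos: "\<And>s. s > a \<Longrightarrow> e s > 0" and G_pos: "\<And>s. s > a \<Longrightarrow> G s > 0"
    and w_lim: "(w \<longlongrightarrow> 0) at_top" and G_lim: "(G \<longlongrightarrow> 0) at_top"
  shows "\<forall>\<^sub>F x in at_top. set_integrable lborel {x..} e"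
    and "((\<lambda>x. (LINT s:{x..}|lborel. e s) / G x) \<longlongrightarrow> 1) at_top"
proof -
  have bound: "\<forall>\<^sub>F x in at_top. set_integrable lborel {x..} e \<and>
      \<bar>G x / (LINT s:{x..}|lborel. e s) - 1\<bar> \<le> \<eta>" if "0 < \<eta>" "\<eta> < 1" for \<eta>
  proof -
    obtain X where X: "\<And>s. s \<ge> X \<Longrightarrow> \<bar>w s\<bar> \<le> \<eta>"
      using tendstoD[OF w_lim \<open>0 < \<eta>\<close>] by (force simp: eventually_at_top_linorder dist_real_def)
    show ?thesis
      using eventually_gt_at_top[of "max a X"]
    proof eventually_elim
      case (elim x)
      have "isCont G x"
        using deriv[of x] elim DERIV_isCont by auto
      then have "set_integrable lborel {x<..} e \<and> \<bar>G x / (LINT s:{x<..}|lborel. e s) - 1\<bar> \<le> \<eta>"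
        by (intro conjI tail_integral_ratio_bound[of x G e w \<eta>])
          (use deriv e_cont w_cont e_pos G_pos[of x] G_lim X \<open>\<eta> < 1\<close> elim in auto)
      then show ?case
        by (simp add: set_integrable_atLeast_iff_greaterThan set_integral_atLeast_eq_greaterThan)
    qed
  qed
  show "\<forall>\<^sub>F x in at_top. set_integrable lborel {x..} e"
    using bound[of "1/2"] by (auto elim: eventually_mono)
  have "((\<lambda>x. G x / (LINT s:{x..}|lborel. e s)) \<longlongrightarrow> 1) at_top"
  proof (rule tendstoI)
    fix \<epsilon> :: real
    assume "\<epsilon> > 0"
    then have "0 < min (\<epsilon>/2) (1/2)" "min (\<epsilon>/2) (1/2) < (1::real)"
      by auto
    from bound[OF this]
    have "\<forall>\<^sub>F x in at_top. \<bar>G x / (LINT s:{x..}|lborel. e s) - 1\<bar> \<le> min (\<epsilon>/2) (1/2)"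
      by (rule eventually_mono) simp
    then show "\<forall>\<^sub>F x in at_top. dist (G x / (LINT s:{x..}|lborel. e s)) 1 < \<epsilon>"
      by (rule eventually_mono) (use \<open>\<epsilon> > 0\<close> in \<open>simp add: dist_real_def\<close>)
  qed
  from tendsto_inverse[OF this] show "((\<lambda>x. (LINT s:{x..}|lborel. e s) / G x) \<longlongrightarrow> 1) at_top"
    by simp
qed

section \<open>The function f and its inverse g\<close>

locale growth_fun =
  fixes f :: "real \<Rightarrow> real" and D :: "nat \<Rightarrow> real \<Rightarrow> real"
  assumes C4: "C_n_on 4 {0..} f D"
    and deriv_pos: "\<And>x. x \<ge> 0 \<Longrightarrow> D 1 x > 0"
    and f_at_top: "filterlim f at_top at_top"
begin

abbreviation g :: "real \<Rightarrow> real" where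
  "g \<equiv> ginv f"

lemma D_has_derivative_within: "k < 4 \<Longrightarrow> x \<ge> 0 \<Longrightarrow> (D k has_real_derivative D (Suc k) x) (at x within {0..})"
  using C4 by (auto simp: C_n_on_def)

lemma D_has_derivative: "k < 4 \<Longrightarrow> x > 0 \<Longrightarrow> (D k has_real_derivative D (Suc k) x) (at x)"
  by (rule has_real_derivative_at_of_within_atLeast[OF D_has_derivative_within]) auto

lemma f_has_derivative: "x > 0 \<Longrightarrow> (f has_real_derivative D 1 x) (at x)"
  using D_has_derivative[of 0 x] C4 by (simp add: C_n_on_def)

lemma D1_has_derivative: "x > 0 \<Longrightarrow> (D 1 has_real_derivative D 2 x) (at x)"
  using D_has_derivative[of 1 x] by (simp add: numeral_2_eq_2)

lemma isCont_f: "x > 0 \<Longrightarrow> isCont f x"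
  using f_has_derivative DERIV_isCont by blast

lemma isCont_D: "k \<le> 3 \<Longrightarrow> x > 0 \<Longrightarrow> isCont (D k) x"
  using D_has_derivative[of k x] DERIV_isCont by auto

lemma continuous_on_f: "continuous_on {0..} f"
proof -
  have "continuous (at x within {0..}) (D 0)" if "x \<ge> 0" for x
    using DERIV_continuous[OF D_has_derivative_within[of 0 x]] that by simp
  then show ?thesis
    using C4 by (auto simp: C_n_on_def continuous_on_eq_continuous_within)
qed

lemma f_strict_mono: "strict_mono_on {0..} f"
proof (rule strict_mono_onI)
  fix a b :: real
  assume "a \<in> {0..}" "b \<in> {0..}" "a < b"
  then have "\<exists>y. DERIV f x :> y \<and> y > 0" if "a < x" for x
    using f_has_derivative[of x] deriv_pos[of x] that by auto
  moreover have "continuous_on {a..b} f"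
    using continuous_on_subset[OF continuous_on_f] \<open>a \<in> {0..}\<close> by auto
  ultimately show "f a < f b"
    using DERIV_pos_imp_increasing_open[OF \<open>a < b\<close>] by blast
qed

lemma f_less_iff: "a \<ge> 0 \<Longrightarrow> b \<ge> 0 \<Longrightarrow> f a < f b \<longleftrightarrow> a < b"
  using strict_mono_on_less[OF f_strict_mono] by simp

lemma f_in_image: "y \<ge> f 0 \<Longrightarrow> y \<in> f ` {0..}"
proof -
  assume "y \<ge> f 0"
  have "\<forall>\<^sub>F x in at_top. y \<le> f x"
    using f_at_top by (simp add: filterlim_at_top)
  then obtain N where N: "\<And>x. x \<ge> N \<Longrightarrow> y \<le> f x"
    by (auto simp: eventually_at_top_linorder)
  obtain b where "b \<ge> 0" "f b \<ge> y"
    using N[of "max N 0"] by (intro that[of "max N 0"]) auto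
  then obtain x where "0 \<le> x" "x \<le> b" "f x = y"
    using IVT'[of f 0 y b] \<open>y \<ge> f 0\<close> continuous_on_subset[OF continuous_on_f, of "{0..b}"] by auto
  then show ?thesis by auto
qed

lemma f_gt_f0: "x > 0 \<Longrightarrow> f x > f 0"
  using f_less_iff[of 0 x] by simp

lemma g_f: "x \<ge> 0 \<Longrightarrow> g (f x) = x"
  unfolding ginv_def by (rule the_inv_into_f_f[OF strict_mono_on_imp_inj_on[OF f_strict_mono]]) auto

lemma f_g: "y \<ge> f 0 \<Longrightarrow> f (g y) = y"
  unfolding ginv_def
  by (rule f_the_inv_into_f[OF strict_mono_on_imp_inj_on[OF f_strict_mono] f_in_image])

lemma g_nonneg: "y \<ge> f 0 \<Longrightarrow> g y \<ge> 0"
  unfolding ginv_def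
  using the_inv_into_into[OF strict_mono_on_imp_inj_on[OF f_strict_mono] f_in_image, of y] by auto

lemma g_pos: "y > f 0 \<Longrightarrow> g y > 0"
  using g_nonneg[of y] f_g[of y] by (metis less_le less_imp_le)

lemma g_has_derivative: "t > f 0 \<Longrightarrow> (g has_real_derivative 1 / D 1 (g t)) (at t)"
proof -
  assume t: "t > f 0"
  then have gt: "g t > 0"
    by (rule g_pos)
  have near_pos: "z > 0" if "\<bar>z - g t\<bar> \<le> g t / 2" for z
    using that gt by linarith
  have "isCont g (f (g t))"
    by (rule isCont_inverse_function[where d = "g t / 2"])
      (use gt near_pos g_f isCont_f in \<open>auto simp: less_imp_le\<close>)
  then have "isCont g t"
    using f_g t by simp
  then have "DERIV g t :> inverse (D 1 (g t))"
    by (intro DERIV_inverse_function[where a = "f 0" and b = "t + 1"])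
      (use f_has_derivative[OF gt] deriv_pos[of "g t"] gt t f_g in auto)
  then show ?thesis
    by (simp add: divide_inverse)
qed

lemma gd1_eq: "t > f 0 \<Longrightarrow> gd f 1 t = 1 / D 1 (g t)"
  unfolding gd_def using DERIV_imp_deriv[OF g_has_derivative] by simp

lemma gd1_pos: "t > f 0 \<Longrightarrow> gd f 1 t > 0"
  using gd1_eq g_pos deriv_pos by (simp add: less_imp_le)

lemma gd1_has_derivative:
  assumes "t > f 0"
  shows "(gd f 1 has_real_derivative - D 2 (g t) / D 1 (g t) ^ 3) (at t)"
proof -
  have gt: "g t > 0" and D1: "D 1 (g t) > 0"
    using g_pos deriv_pos assms by (auto simp: less_imp_le)
  have "((\<lambda>s. D 1 (g s)) has_real_derivative D 2 (g t) * (1 / D 1 (g t))) (at t)"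
    by (rule DERIV_chain2[OF D1_has_derivative[OF gt] g_has_derivative[OF assms]])
  from DERIV_inverse_fun[OF this] D1
  have "((\<lambda>s. 1 / D 1 (g s)) has_real_derivative - D 2 (g t) / D 1 (g t) ^ 3) (at t)"
    by (simp add: divide_inverse power3_eq_cube power2_eq_square mult.assoc)
  then show ?thesis
    by (rule has_field_derivative_transform_within_open[where S = "{f 0<..}"])
      (use assms gd1_eq in auto)
qed

lemma gd2_eq: "t > f 0 \<Longrightarrow> gd f 2 t = - D 2 (g t) / D 1 (g t) ^ 3"
  using DERIV_imp_deriv[OF gd1_has_derivative] by (simp add: gd_def numeral_2_eq_2)

lemma gd1_has_derivative_gd2: "t > f 0 \<Longrightarrow> (gd f 1 has_real_derivative gd f 2 t) (at t)"
  using gd1_has_derivative gd2_eq by simp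

lemma g_has_derivative_gd1: "t > f 0 \<Longrightarrow> (g has_real_derivative gd f 1 t) (at t)"
  using g_has_derivative gd1_eq by simp

lemma ln_gd1_has_derivative:
  "t > f 0 \<Longrightarrow> ((\<lambda>s. ln (gd f 1 s)) has_real_derivative gd f 2 t / gd f 1 t) (at t)"
  using DERIV_chain2[OF DERIV_ln_divide[OF gd1_pos] gd1_has_derivative_gd2] by simp

lemma abs_f_minus_less_of_between:
  assumes "x \<ge> 0" "Z - \<delta> \<ge> f 0" "\<delta> \<ge> 0" "g (Z - \<delta>) < x" "x < g (Z + \<delta>)"
  shows "\<bar>f x - Z\<bar> < \<delta>"
proof -
  have "f (g (Z - \<delta>)) < f x" "f x < f (g (Z + \<delta>))"
    using assms g_nonneg[of "Z - \<delta>"] g_nonneg[of "Z + \<delta>"] f_less_iff by auto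
  then show ?thesis
    using assms f_g[of "Z - \<delta>"] f_g[of "Z + \<delta>"] by (simp add: abs_less_iff)
qed
end

locale regular_growth = growth_fun +
  fixes \<beta> :: real
  assumes beta_nonneg: "\<beta> \<ge> 0"
    and gd2_tendsto_0: "(gd f 2 \<longlongrightarrow> 0) at_top"
    and gd2_ln_gd1_tendsto_0: "((\<lambda>t. gd f 2 t / gd f 1 t * ln (gd f 1 t)) \<longlongrightarrow> 0) at_top"
begin

lemma eventually_gd1_pos: "\<forall>\<^sub>F t in at_top. gd f 1 t > 0"
  using eventually_gt_at_top[of "f 0"] by (rule eventually_mono) (rule gd1_pos)

lemma gd2_div_gd1_tendsto_0: "((\<lambda>t. gd f 2 t / gd f 1 t) \<longlongrightarrow> 0) at_top"
  by (rule tendsto_0_of_div_mult_ln_tendsto_0[OF gd2_tendsto_0 gd2_ln_gd1_tendsto_0 eventually_gd1_pos])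

lemma ln_gd1_div_tendsto_0: "((\<lambda>t. ln (gd f 1 t) / t) \<longlongrightarrow> 0) at_top"
proof (rule lhospital_at_top_at_top[where g' = "\<lambda>_. 1" and f' = "\<lambda>t. gd f 2 t / gd f 1 t"])
  show "\<forall>\<^sub>F t in at_top. ((\<lambda>s. ln (gd f 1 s)) has_real_derivative gd f 2 t / gd f 1 t) (at t)"
    using eventually_gt_at_top[of "f 0"] by (rule eventually_mono) (rule ln_gd1_has_derivative)
qed (use gd2_div_gd1_tendsto_0 filterlim_ident in auto)

lemma ln_gd1_lipschitz:
  obtains T where "T > f 0"
    and "\<And>a b. a \<ge> T \<Longrightarrow> b \<ge> T \<Longrightarrow> \<bar>ln (gd f 1 b) - ln (gd f 1 a)\<bar> \<le> \<bar>b - a\<bar>"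
proof -
  obtain T0 where T0: "\<And>t. t \<ge> T0 \<Longrightarrow> \<bar>gd f 2 t / gd f 1 t\<bar> \<le> 1"
    using tendstoD[OF gd2_div_gd1_tendsto_0 zero_less_one]
    by (force simp: eventually_at_top_linorder dist_real_def)
  define T where "T = max T0 (f 0 + 1)"
  have "\<bar>ln (gd f 1 b) - ln (gd f 1 a)\<bar> \<le> 1 * \<bar>b - a\<bar>" if "a \<ge> T" "b \<ge> T" for a b
    unfolding real_norm_def[symmetric]
    by (rule field_differentiable_bound[where S = "{T..}" and f' = "\<lambda>t. gd f 2 t / gd f 1 t"])
      (use that T0 ln_gd1_has_derivative in \<open>auto simp: T_def intro: has_field_derivative_at_within\<close>)
  then show ?thesis
    using that[of T] by (simp add: T_def)
qed

lemma g_increment_bounds: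
  obtains T where "T > f 0"
    and "\<And>Z \<delta>. Z \<ge> T \<Longrightarrow> 0 \<le> \<delta> \<Longrightarrow> \<delta> \<le> 1 \<Longrightarrow>
      g (Z + \<delta>) - g Z \<ge> gd f 1 Z / 3 * \<delta> \<and> g Z - g (Z - \<delta>) \<ge> gd f 1 Z / 3 * \<delta>"
proof -
  obtain T0 where T0: "T0 > f 0"
    and lip: "\<And>a b. a \<ge> T0 \<Longrightarrow> b \<ge> T0 \<Longrightarrow> \<bar>ln (gd f 1 b) - ln (gd f 1 a)\<bar> \<le> \<bar>b - a\<bar>"
    using ln_gd1_lipschitz by blast
  have comparable: "gd f 1 s \<ge> gd f 1 Z / 3" if "Z \<ge> T0 + 1" "\<bar>s - Z\<bar> \<le> 1" for s Z
  proof -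
    have pos: "gd f 1 s > 0" "gd f 1 Z > 0"
      using gd1_pos T0 that by auto
    have "s \<ge> T0"
      using that by (auto simp: abs_le_iff)
    then have "ln (gd f 1 Z) - 1 \<le> ln (gd f 1 s)"
      using lip[of Z s] that by (auto simp: abs_le_iff)
    then have "exp (ln (gd f 1 Z) - 1) \<le> gd f 1 s"
      using pos by (metis exp_le_cancel_iff exp_ln)
    moreover have "exp (ln (gd f 1 Z) - 1) = gd f 1 Z * exp (-1)"
      using pos by (simp add: exp_diff exp_minus field_simps)
    moreover have "gd f 1 Z * (1/3) \<le> gd f 1 Z * exp (-1)"
      using pos exp_minus_one_ge_third by (intro mult_left_mono) auto
    ultimately show ?thesis
      by simp
  qed
  have deriv: "(g has_real_derivative gd f 1 s) (at s)" if "s \<ge> T0" for s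
    using g_has_derivative_gd1 T0 that by simp
  show ?thesis
  proof (rule that[of "T0 + 1"])
    fix Z \<delta> :: real
    assume "Z \<ge> T0 + 1" "0 \<le> \<delta>" "\<delta> \<le> 1"
    then show "g (Z + \<delta>) - g Z \<ge> gd f 1 Z / 3 * \<delta> \<and> g Z - g (Z - \<delta>) \<ge> gd f 1 Z / 3 * \<delta>"
      using diff_ge_of_deriv_ge[of Z "Z + \<delta>" g "gd f 1" "gd f 1 Z / 3"]
        diff_ge_of_deriv_ge[of "Z - \<delta>" Z g "gd f 1" "gd f 1 Z / 3"] deriv comparable
      by auto
  qed (use T0 in simp)
qed

lemma beta_plus_1_pos: "\<beta> + 1 > 0"
  using beta_nonneg by simp

definition weight :: "real \<Rightarrow> real" where
  "weight x = exp (- f x / (\<beta> + 1))"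

text \<open>One integration by parts: \<open>\<F>(x) = tail_approx x - \<integral>\<^sub>x\<^sup>\<infinity> weight \<cdot> tail_error\<close>.\<close>
definition tail_approx :: "real \<Rightarrow> real" where
  "tail_approx x = (\<beta> + 1) * weight x / D 1 x"

definition tail_error :: "real \<Rightarrow> real" where
  "tail_error x = (\<beta> + 1) * D 2 x / D 1 x ^ 2"

lemma Fcal_eq: "Fcal f \<beta> x = (LINT s:{x..}|lborel. weight s)"
  by (simp add: Fcal_def weight_def)

lemma weight_pos: "weight x > 0"
  by (simp add: weight_def)

lemma continuous_on_weight: "continuous_on {0..} weight"
  unfolding weight_def[abs_def] using beta_plus_1_pos
  by (intro continuous_intros continuous_on_f) simp

lemma isCont_weight: "x > 0 \<Longrightarrow> isCont weight x"
  unfolding weight_def[abs_def] using beta_plus_1_pos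
  by (intro continuous_intros isCont_f) auto

lemma isCont_tail_error: "x > 0 \<Longrightarrow> isCont tail_error x"
  unfolding tail_error_def[abs_def] using deriv_pos[of x]
  by (intro continuous_intros isCont_D) auto

lemma tail_approx_pos: "x > 0 \<Longrightarrow> tail_approx x > 0"
  using weight_pos[of x] deriv_pos[of x] beta_plus_1_pos by (simp add: tail_approx_def)

lemma tail_approx_has_derivative:
  assumes "x > 0"
  shows "(tail_approx has_real_derivative - (weight x * (1 + tail_error x))) (at x)"
proof -
  have D1: "D 1 x > 0"
    using deriv_pos assms by simp
  have "(weight has_real_derivative weight x * (- D 1 x / (\<beta> + 1))) (at x)"
    unfolding weight_def[abs_def]
    by (rule DERIV_chain2[OF DERIV_exp DERIV_cdivide[OF DERIV_minus[OF f_has_derivative[OF assms]]]])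
  then have "((\<lambda>x. (\<beta> + 1) * weight x / D 1 x) has_real_derivative
      ((\<beta> + 1) * (weight x * (- D 1 x / (\<beta> + 1))) * D 1 x - (\<beta> + 1) * weight x * D 2 x)
        / (D 1 x * D 1 x)) (at x)"
    by (rule DERIV_divide[OF DERIV_cmult D1_has_derivative[OF assms]]) (use D1 in simp)
  moreover have "((\<beta> + 1) * (weight x * (- D 1 x / (\<beta> + 1))) * D 1 x - (\<beta> + 1) * weight x * D 2 x)
        / (D 1 x * D 1 x) = - (weight x * (1 + tail_error x))"
  proof -
    have "(\<beta> + 1) * (weight x * (- D 1 x / (\<beta> + 1))) = - (weight x * D 1 x)"
      using beta_plus_1_pos by simp
    then show ?thesis
      using D1 by (simp add: tail_error_def field_simps power2_eq_square)
  qed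
  ultimately show ?thesis
    unfolding tail_approx_def[abs_def] by simp
qed

lemma tail_approx_eq:
  assumes "x > 0"
  shows "tail_approx x = (\<beta> + 1) * exp (- f x / (\<beta> + 1)) * gd f 1 (f x)"
  using gd1_eq[OF f_gt_f0[OF assms]] g_f[of x] assms by (simp add: tail_approx_def weight_def)

lemma tail_error_eq:
  assumes "x > 0"
  shows "tail_error x = - (\<beta> + 1) * (gd f 2 (f x) / gd f 1 (f x))"
proof -
  have gd: "gd f 1 (f x) = 1 / D 1 x" "gd f 2 (f x) = - D 2 x / D 1 x ^ 3"
    using gd1_eq[OF f_gt_f0[OF assms]] gd2_eq[OF f_gt_f0[OF assms]] g_f[of x] assms by auto
  show ?thesis
    unfolding gd tail_error_def using deriv_pos[of x] assms
    by (simp add: field_simps power2_eq_square power3_eq_cube)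
qed

lemma tail_error_tendsto_0: "(tail_error \<longlongrightarrow> 0) at_top"
proof -
  have "((\<lambda>x. - (\<beta> + 1) * (gd f 2 (f x) / gd f 1 (f x))) \<longlongrightarrow> - (\<beta> + 1) * 0) at_top"
    by (intro tendsto_mult tendsto_const filterlim_compose[OF gd2_div_gd1_tendsto_0 f_at_top])
  moreover have "\<forall>\<^sub>F x in at_top. - (\<beta> + 1) * (gd f 2 (f x) / gd f 1 (f x)) = tail_error x"
    using eventually_gt_at_top[of 0] by (rule eventually_mono) (simp add: tail_error_eq)
  ultimately show ?thesis
    using tendsto_cong by force
qed

lemma tail_approx_tendsto_0: "(tail_approx \<longlongrightarrow> 0) at_top"
proof -
  have "LIM t at_top. (ln (gd f 1 t) / t - 1 / (\<beta> + 1)) * t :> at_bot"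
    by (rule filterlim_tendsto_neg_mult_at_bot[OF tendsto_diff[OF ln_gd1_div_tendsto_0 tendsto_const]
          _ filterlim_ident]) (use beta_plus_1_pos in simp)
  moreover have "\<forall>\<^sub>F t in at_top. (ln (gd f 1 t) / t - 1 / (\<beta> + 1)) * t = ln (gd f 1 t) - t / (\<beta> + 1)"
    using eventually_gt_at_top[of 0] by (rule eventually_mono) (simp add: field_simps)
  ultimately have "LIM t at_top. ln (gd f 1 t) - t / (\<beta> + 1) :> at_bot"
    using filterlim_cong by fastforce
  from filterlim_compose[OF exp_at_bot this]
  have "((\<lambda>t. (\<beta> + 1) * exp (ln (gd f 1 t) - t / (\<beta> + 1))) \<longlongrightarrow> (\<beta> + 1) * 0) at_top"
    by (intro tendsto_mult tendsto_const)
  from filterlim_compose[OF this f_at_top]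
  have lim: "((\<lambda>x. (\<beta> + 1) * exp (ln (gd f 1 (f x)) - f x / (\<beta> + 1))) \<longlongrightarrow> 0) at_top"
    by simp
  have "\<forall>\<^sub>F x in at_top. (\<beta> + 1) * exp (ln (gd f 1 (f x)) - f x / (\<beta> + 1)) = tail_approx x"
    using eventually_gt_at_top[of 0]
  proof (rule eventually_mono)
    fix x :: real
    assume "x > 0"
    then show "(\<beta> + 1) * exp (ln (gd f 1 (f x)) - f x / (\<beta> + 1)) = tail_approx x"
      using tail_approx_eq[of x] gd1_pos[OF f_gt_f0[of x]]
      by (simp add: exp_diff exp_minus field_simps)
  qed
  from tendsto_cong[OF this] lim show ?thesis
    by simp
qed

lemma
  shows eventually_weight_integrable: "\<forall>\<^sub>F x in at_top. set_integrable lborel {x..} weight"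
    and Fcal_div_tail_approx_tendsto_1: "((\<lambda>x. Fcal f \<beta> x / tail_approx x) \<longlongrightarrow> 1) at_top"
  using tail_integral_asymp[of 0 tail_approx weight tail_error, OF tail_approx_has_derivative
      isCont_weight isCont_tail_error weight_pos tail_approx_pos tail_error_tendsto_0 tail_approx_tendsto_0]
  by (simp_all add: Fcal_eq)

lemma weight_integrable: "set_integrable lborel {0..} weight"
proof -
  obtain X where X: "X \<ge> 0" "set_integrable lborel {X..} weight"
    using eventually_conj[OF eventually_weight_integrable eventually_ge_at_top[of 0]]
    by (auto simp: eventually_at_top_linorder)
  have "set_integrable lborel {0..X} weight"
    by (rule borel_integrable_atLeastAtMost') (rule continuous_on_subset[OF continuous_on_weight], auto)
  then have "set_integrable lborel ({0..X} \<union> {X..}) weight"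
    by (rule set_integrable_Un[OF _ X(2)]) auto
  moreover have "{0..X} \<union> {X..} = {0..}"
    using X by auto
  ultimately show ?thesis
    by simp
qed

lemma Fcal_strict_antimono:
  assumes "0 \<le> a" "a < b"
  shows "Fcal f \<beta> b < Fcal f \<beta> a"
proof -
  have int: "set_integrable lborel A weight" if "A \<subseteq> {0..}" "A \<in> sets borel" for A
    by (rule set_integrable_subset[OF weight_integrable]) (use that in auto)
  have "Fcal f \<beta> a = (LINT s:{a..<b} \<union> {b..}|lborel. weight s)"
    unfolding Fcal_eq using assms by (intro arg_cong[where f = "\<lambda>A. LINT s:A|lborel. weight s"]) auto
  also have "\<dots> = (LINT s:{a..<b}|lborel. weight s) + Fcal f \<beta> b"
    unfolding Fcal_eq by (rule set_integral_Un) (use assms in \<open>auto intro!: int\<close>)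
  finally have split: "Fcal f \<beta> a = (LINT s:{a..<b}|lborel. weight s) + Fcal f \<beta> b" .
  have "(b - a) * weight b = (LINT s:{a..<b}|lborel. weight b)"
    using assms by (simp add: set_integral_const)
  also have "\<dots> \<le> (LINT s:{a..<b}|lborel. weight s)"
  proof (rule set_integral_mono)
    show "set_integrable lborel {a..<b} (\<lambda>s. weight b)"
      by (rule set_integrable_subset[OF borel_integrable_atLeastAtMost'[of a b]]) auto
    show "set_integrable lborel {a..<b} weight"
      by (rule int) (use assms in auto)
    fix s
    assume "s \<in> {a..<b}"
    then have "f s < f b"
      using f_less_iff[of s b] assms by auto
    then show "weight b \<le> weight s"
      using beta_plus_1_pos by (simp add: weight_def divide_right_mono)
  qed
  finally show ?thesis
    using split assms weight_pos[of b] mult_pos_pos[of "b - a" "weight b"] by linarith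
qed

lemma inj_on_Fcal: "inj_on (Fcal f \<beta>) {0..}"
proof (rule inj_onI)
  fix x y :: real
  assume "x \<in> {0..}" "y \<in> {0..}" "Fcal f \<beta> x = Fcal f \<beta> y"
  then show "x = y"
    using Fcal_strict_antimono[of x y] Fcal_strict_antimono[of y x]
    by (cases x y rule: linorder_cases) auto
qed

end

section \<open>The singular solution\<close>

locale singular_solution_setting = regular_growth +
  fixes \<alpha> \<gamma> lam :: real and u :: "real \<Rightarrow> real"
  assumes theta_pos: "theta \<alpha> \<beta> \<gamma> > 0" and alpha_gt: "\<alpha> > \<beta> + 1" and lam_pos: "lam > 0"
    and gd1_ratio_shift:
      "\<And>h. h \<in> o[at_top](\<lambda>t. t) \<Longrightarrow> ((\<lambda>t. gd f 1 t / gd f 1 (t + h t)) \<longlongrightarrow> 1) at_top"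
    and gd2_shift: "\<And>h. h \<in> o[at_top](\<lambda>t. t) \<Longrightarrow> (\<lambda>t. gd f 2 (t + h t)) \<in> O[at_top](gd f 2)"
    and u_at_top: "filterlim u at_top (at_right 0)"
    and u_asymp: "(\<lambda>r. u r - g (Zfun f \<alpha> \<beta> \<gamma> lam r))
       \<in> O[at_right 0](\<lambda>r. gd f 2 (ln (r powr (- theta \<alpha> \<beta> \<gamma>))))"
begin

abbreviation \<theta> :: real where
  "\<theta> \<equiv> theta \<alpha> \<beta> \<gamma>"

text \<open>Everything is parametrized by \<open>\<tau> = ln ((\<beta> + 1) / (lam r\<^sup>\<theta>))\<close> of Theorem 1.1:
  \<open>radius \<tau>\<close> is the radius \<open>r\<close> with that \<open>\<tau>\<close>, \<open>scaled_radius \<tau> = radius \<tau> * lam\<^sup>1\<^sup>/\<^sup>\<theta>\<close> is the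
  variable of the conclusion, and \<open>Zt \<tau>\<close>, \<open>Wt \<tau>\<close> are \<open>Z(r)\<close> and \<open>f(u(r))\<close> there.\<close>
definition scaled_radius :: "real \<Rightarrow> real" where
  "scaled_radius \<tau> = exp ((ln (\<beta> + 1) - \<tau>) / \<theta>)"

definition radius :: "real \<Rightarrow> real" where
  "radius \<tau> = scaled_radius \<tau> * lam powr (- 1 / \<theta>)"

definition Zt :: "real \<Rightarrow> real" where
  "Zt \<tau> = Zfun f \<alpha> \<beta> \<gamma> lam (radius \<tau>)"

definition Wt :: "real \<Rightarrow> real" where
  "Wt \<tau> = f (u (radius \<tau>))"

definition gsum :: "real \<Rightarrow> real" where
  "gsum \<tau> = gd f 1 \<tau> + (\<beta> + 1) * gd f 2 \<tau> * ln (gd f 1 \<tau>)"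

definition A :: real where
  "A = ln (\<theta> powr (\<beta> + 1) * (\<alpha> - \<beta> - 1)) - ln (\<beta> + 1)"

definition K :: real where
  "K = (\<beta> + 1) / \<theta> * (\<alpha> - \<beta> - 1) powr (- 1 / (\<beta> + 1))"

lemma K_pos: "K > 0"
  using theta_pos alpha_gt beta_plus_1_pos by (simp add: K_def)

lemma radius_pos: "radius \<tau> > 0"
  using lam_pos by (simp add: radius_def scaled_radius_def)

lemma ln_radius: "ln (radius \<tau>) = (ln (\<beta> + 1) - ln lam - \<tau>) / \<theta>"
  using lam_pos theta_pos by (simp add: radius_def scaled_radius_def ln_mult ln_powr field_simps)

lemma tau_of_radius: "ln ((\<beta> + 1) / (lam * radius \<tau> powr \<theta>)) = \<tau>"
proof -
  have "ln (radius \<tau> powr \<theta>) = ln (\<beta> + 1) - ln lam - \<tau>"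
    using radius_pos[of \<tau>] theta_pos by (simp add: ln_powr ln_radius)
  then show ?thesis
    using radius_pos[of \<tau>] lam_pos beta_plus_1_pos by (simp add: ln_div ln_mult)
qed

lemma Zt_eq: "Zt \<tau> = A + \<tau> + (\<beta> + 1) * ln (gsum \<tau>)"
  unfolding Zt_def Zfun_def Let_def tau_of_radius ln_radius
  using theta_pos by (simp add: A_def gsum_def field_simps)

lemma ln_radius_powr: "ln (radius \<tau> powr (- \<theta>)) = \<tau> + (ln lam - ln (\<beta> + 1))"
  using radius_pos[of \<tau>] theta_pos by (simp add: ln_powr ln_radius field_simps)

lemma K_scaled_radius_eq: "K * scaled_radius \<tau> powr (\<theta> / (\<beta> + 1)) = (\<beta> + 1) * exp (- (\<tau> + A) / (\<beta> + 1))"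
proof -
  define c where "c = \<beta> + 1"
  have "c > 0"
    using beta_plus_1_pos by (simp add: c_def)
  have K: "K = c * exp (- ln \<theta> - ln (\<alpha> - \<beta> - 1) / c)"
    unfolding c_def using theta_pos alpha_gt by (simp add: K_def powr_def exp_diff exp_minus field_simps)
  have r: "scaled_radius \<tau> powr (\<theta> / c) = exp ((ln c - \<tau>) / c)"
    unfolding c_def using theta_pos beta_plus_1_pos by (simp add: scaled_radius_def powr_def)
  have A_eq: "A = c * ln \<theta> + ln (\<alpha> - \<beta> - 1) - ln c"
    unfolding A_def c_def using theta_pos alpha_gt by (simp add: ln_mult ln_powr)
  have "- ln \<theta> - ln (\<alpha> - \<beta> - 1) / c + (ln c - \<tau>) / c = - (\<tau> + A) / c"
    unfolding A_eq using \<open>c > 0\<close> by (simp add: field_simps)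
  then show ?thesis
    unfolding c_def[symmetric] K r by (simp flip: exp_add)
qed

lemma radius_tendsto_0: "filterlim radius (at_right 0) at_top"
proof -
  have "LIM \<tau> at_top. ln (\<beta> + 1) / \<theta> + (- 1 / \<theta>) * \<tau> :> at_bot"
    unfolding filterlim_tendsto_add_at_bot_iff[OF tendsto_const]
    by (rule filterlim_tendsto_neg_mult_at_bot[OF tendsto_const _ filterlim_ident]) (use theta_pos in simp)
  then have "LIM \<tau> at_top. (ln (\<beta> + 1) - \<tau>) / \<theta> :> at_bot"
    by (simp add: diff_divide_distrib)
  from tendsto_mult_left_zero[OF filterlim_compose[OF exp_at_bot this]]
  have "(radius \<longlongrightarrow> 0) at_top"
    unfolding radius_def scaled_radius_def by simp
  then show ?thesis
    using radius_pos by (intro tendsto_imp_filterlim_at_right) auto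
qed

lemma u_radius_at_top: "filterlim (\<lambda>\<tau>. u (radius \<tau>)) at_top at_top"
  using filterlim_compose[OF u_at_top radius_tendsto_0] .

lemma u_radius_error:
  obtains C where "C > 0" and "\<forall>\<^sub>F \<tau> in at_top. \<bar>u (radius \<tau>) - g (Zt \<tau>)\<bar> \<le> C * \<bar>gd f 2 \<tau>\<bar>"
proof -
  obtain c where "c > 0" and c: "\<forall>\<^sub>F r in at_right 0. norm (u r - g (Zfun f \<alpha> \<beta> \<gamma> lam r))
      \<le> c * norm (gd f 2 (ln (r powr (- \<theta>))))"
    using u_asymp by (elim landau_o.bigE)
  from filterlim_iff[THEN iffD1, OF radius_tendsto_0, rule_format, OF c]
  have err: "\<forall>\<^sub>F \<tau> in at_top. \<bar>u (radius \<tau>) - g (Zt \<tau>)\<bar> \<le> c * \<bar>gd f 2 (\<tau> + (ln lam - ln (\<beta> + 1)))\<bar>"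
    by (simp only: Zt_def ln_radius_powr real_norm_def)
  have "(\<lambda>\<tau>. ln lam - ln (\<beta> + 1)) \<in> o[at_top](\<lambda>t. t)"
    by real_asymp
  from gd2_shift[OF this] obtain c' where "c' > 0"
    and c': "\<forall>\<^sub>F \<tau> in at_top. norm (gd f 2 (\<tau> + (ln lam - ln (\<beta> + 1)))) \<le> c' * norm (gd f 2 \<tau>)"
    by (elim landau_o.bigE)
  have "\<forall>\<^sub>F \<tau> in at_top. \<bar>u (radius \<tau>) - g (Zt \<tau>)\<bar> \<le> (c * c') * \<bar>gd f 2 \<tau>\<bar>"
    using err c'
  proof eventually_elim
    case (elim \<tau>)
    have "c * \<bar>gd f 2 (\<tau> + (ln lam - ln (\<beta> + 1)))\<bar> \<le> c * (c' * \<bar>gd f 2 \<tau>\<bar>)"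
      using elim(2) \<open>c > 0\<close> by (intro mult_left_mono) auto
    then show ?case
      using elim(1) by (simp add: mult.assoc)
  qed
  then show ?thesis
    using that[of "c * c'"] \<open>c > 0\<close> \<open>c' > 0\<close> by simp
qed

lemma gsum_div_gd1_tendsto_1: "((\<lambda>\<tau>. gsum \<tau> / gd f 1 \<tau>) \<longlongrightarrow> 1) at_top"
proof -
  have "((\<lambda>\<tau>. 1 + (\<beta> + 1) * (gd f 2 \<tau> / gd f 1 \<tau> * ln (gd f 1 \<tau>))) \<longlongrightarrow> 1 + (\<beta> + 1) * 0) at_top"
    by (intro tendsto_intros gd2_ln_gd1_tendsto_0)
  moreover have "\<forall>\<^sub>F \<tau> in at_top. 1 + (\<beta> + 1) * (gd f 2 \<tau> / gd f 1 \<tau> * ln (gd f 1 \<tau>)) = gsum \<tau> / gd f 1 \<tau>"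
    using eventually_gd1_pos by eventually_elim (simp add: gsum_def field_simps)
  ultimately show ?thesis
    using tendsto_cong by force
qed

lemma eventually_gsum_pos: "\<forall>\<^sub>F \<tau> in at_top. gsum \<tau> > 0"
proof -
  have "\<forall>\<^sub>F \<tau> in at_top. gsum \<tau> / gd f 1 \<tau> > 0"
    using order_tendstoD(1)[OF gsum_div_gd1_tendsto_1, of 0] by simp
  with eventually_gd1_pos show ?thesis
    by eventually_elim (simp add: zero_less_divide_iff)
qed

lemma Zt_minus_tau_small: "(\<lambda>\<tau>. Zt \<tau> - \<tau>) \<in> o[at_top](\<lambda>t. t)"
proof (rule smalloI_tendsto)
  have ln_ratio: "((\<lambda>\<tau>. ln (gsum \<tau> / gd f 1 \<tau>)) \<longlongrightarrow> 0) at_top"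
    using tendsto_ln[OF gsum_div_gd1_tendsto_1] by simp
  have inf: "filterlim (\<lambda>\<tau>::real. \<tau>) at_infinity at_top"
    by (rule filterlim_at_top_imp_at_infinity[OF filterlim_ident])
  have "((\<lambda>\<tau>. A / \<tau> + (\<beta> + 1) * (ln (gd f 1 \<tau>) / \<tau>) + (\<beta> + 1) * (ln (gsum \<tau> / gd f 1 \<tau>) / \<tau>))
      \<longlongrightarrow> 0 + (\<beta> + 1) * 0 + (\<beta> + 1) * 0) at_top"
    by (intro tendsto_add tendsto_mult tendsto_const ln_gd1_div_tendsto_0
        tendsto_divide_0[OF tendsto_const inf] tendsto_divide_0[OF ln_ratio inf])
  moreover have "\<forall>\<^sub>F \<tau> in at_top. A / \<tau> + (\<beta> + 1) * (ln (gd f 1 \<tau>) / \<tau>)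
      + (\<beta> + 1) * (ln (gsum \<tau> / gd f 1 \<tau>) / \<tau>) = (Zt \<tau> - \<tau>) / \<tau>"
    using eventually_gd1_pos eventually_gsum_pos
    by eventually_elim (simp add: Zt_eq ln_div add_divide_distrib diff_divide_distrib algebra_simps)
  ultimately show "((\<lambda>\<tau>. (Zt \<tau> - \<tau>) / \<tau>) \<longlongrightarrow> 0) at_top"
    using tendsto_cong by force
  show "\<forall>\<^sub>F \<tau> in at_top. (\<tau>::real) \<noteq> 0"
    using eventually_gt_at_top[of 0] by (rule eventually_mono) simp
qed

lemma gd1_div_gd1_Zt_tendsto_1: "((\<lambda>\<tau>. gd f 1 \<tau> / gd f 1 (Zt \<tau>)) \<longlongrightarrow> 1) at_top"
  using gd1_ratio_shift[OF Zt_minus_tau_small] by simp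

lemma Zt_at_top: "filterlim Zt at_top at_top"
proof -
  have "\<forall>\<^sub>F \<tau> in at_top. norm (Zt \<tau> - \<tau>) \<le> (1/2) * norm \<tau>"
    using landau_o.smallD[OF Zt_minus_tau_small, of "1/2"] by simp
  then have "\<forall>\<^sub>F \<tau> in at_top. \<tau> / 2 \<le> Zt \<tau>"
    using eventually_gt_at_top[of 0]
  proof eventually_elim
    case (elim \<tau>)
    then show ?case
      using abs_ge_minus_self[of "Zt \<tau> - \<tau>"] by simp
  qed
  moreover have "LIM \<tau> at_top. (\<tau>::real) / 2 :> at_top"
    by real_asymp
  ultimately show ?thesis
    by (rule filterlim_at_top_mono[rotated])
qed

lemma eventually_Zt_ge: "\<forall>\<^sub>F \<tau> in at_top. Zt \<tau> \<ge> c"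
  using Zt_at_top by (simp add: filterlim_at_top)

lemma Wt_minus_Zt_tendsto_0: "((\<lambda>\<tau>. Wt \<tau> - Zt \<tau>) \<longlongrightarrow> 0) at_top"
proof (rule tendstoI)
  fix \<epsilon> :: real
  assume "\<epsilon> > 0"
  define \<delta> where "\<delta> = min \<epsilon> 1 / 2"
  have \<delta>: "0 < \<delta>" "\<delta> < \<epsilon>" "\<delta> \<le> 1"
    using \<open>\<epsilon> > 0\<close> by (auto simp: \<delta>_def)
  obtain T where "T > f 0" and incr: "\<And>Z \<delta>. Z \<ge> T \<Longrightarrow> 0 \<le> \<delta> \<Longrightarrow> \<delta> \<le> 1 \<Longrightarrow>
      g (Z + \<delta>) - g Z \<ge> gd f 1 Z / 3 * \<delta> \<and> g Z - g (Z - \<delta>) \<ge> gd f 1 Z / 3 * \<delta>"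
    using g_increment_bounds by blast
  obtain C where "C > 0" and err: "\<forall>\<^sub>F \<tau> in at_top. \<bar>u (radius \<tau>) - g (Zt \<tau>)\<bar> \<le> C * \<bar>gd f 2 \<tau>\<bar>"
    using u_radius_error by blast
  have "\<forall>\<^sub>F \<tau> in at_top. \<bar>gd f 2 \<tau> / gd f 1 \<tau>\<bar> < \<delta> / (6 * C)"
    using tendstoD[OF gd2_div_gd1_tendsto_0, of "\<delta> / (6 * C)"] \<delta> \<open>C > 0\<close> by simp
  moreover have "\<forall>\<^sub>F \<tau> in at_top. gd f 1 \<tau> / gd f 1 (Zt \<tau>) < 2"
    using order_tendstoD(2)[OF gd1_div_gd1_Zt_tendsto_1, of 2] by simp
  moreover have "\<forall>\<^sub>F \<tau> in at_top. gd f 1 (Zt \<tau>) > 0"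
    using filterlim_iff[THEN iffD1, OF Zt_at_top, rule_format, OF eventually_gd1_pos] .
  ultimately have small: "\<forall>\<^sub>F \<tau> in at_top. C * \<bar>gd f 2 \<tau>\<bar> < gd f 1 (Zt \<tau>) / 3 * \<delta>"
    using eventually_gd1_pos
  proof eventually_elim
    case (elim \<tau>)
    then have "\<bar>gd f 2 \<tau>\<bar> < \<delta> / (6 * C) * gd f 1 \<tau>" and "gd f 1 \<tau> < 2 * gd f 1 (Zt \<tau>)"
      by (simp_all add: abs_div field_simps)
    then have "\<bar>gd f 2 \<tau>\<bar> < \<delta> / (6 * C) * (2 * gd f 1 (Zt \<tau>))"
      using \<delta> \<open>C > 0\<close> by (smt (verit) divide_pos_pos mult_strict_left_mono)
    then show ?case
      using \<open>C > 0\<close> by (simp add: field_simps)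
  qed
  have u_nonneg: "\<forall>\<^sub>F \<tau> in at_top. u (radius \<tau>) \<ge> 0"
    using u_radius_at_top by (simp add: filterlim_at_top)
  show "\<forall>\<^sub>F \<tau> in at_top. dist (Wt \<tau> - Zt \<tau>) 0 < \<epsilon>"
    using err small eventually_Zt_ge[of "T + 1"] u_nonneg
  proof eventually_elim
    case (elim \<tau>)
    then have "g (Zt \<tau> - \<delta>) < u (radius \<tau>)" "u (radius \<tau>) < g (Zt \<tau> + \<delta>)"
      using incr[of "Zt \<tau>" \<delta>] \<delta> by (auto simp: abs_le_iff)
    then have "\<bar>Wt \<tau> - Zt \<tau>\<bar> < \<delta>"
      unfolding Wt_def using elim \<delta> \<open>T > f 0\<close> by (intro abs_f_minus_less_of_between) auto
    then show ?case
      using \<delta> by simp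
  qed
qed

lemma gd1_Wt_div_gd1_tendsto_1: "((\<lambda>\<tau>. gd f 1 (Wt \<tau>) / gd f 1 \<tau>) \<longlongrightarrow> 1) at_top"
proof -
  obtain T where "T > f 0"
    and lip: "\<And>a b. a \<ge> T \<Longrightarrow> b \<ge> T \<Longrightarrow> \<bar>ln (gd f 1 b) - ln (gd f 1 a)\<bar> \<le> \<bar>b - a\<bar>"
    using ln_gd1_lipschitz by blast
  have large: "\<forall>\<^sub>F \<tau> in at_top. Wt \<tau> \<ge> T \<and> Zt \<tau> \<ge> T"
    using eventually_Zt_ge[of "T + 1"] order_tendstoD(2)[OF tendsto_rabs_zero[OF Wt_minus_Zt_tendsto_0] zero_less_one]
    by eventually_elim (auto simp: abs_less_iff)
  have "\<forall>\<^sub>F \<tau> in at_top. norm (ln (gd f 1 (Wt \<tau>)) - ln (gd f 1 (Zt \<tau>))) \<le> norm (Wt \<tau> - Zt \<tau>) * 1"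
    using large
  proof eventually_elim
    case (elim \<tau>)
    then show ?case
      using lip[of "Zt \<tau>" "Wt \<tau>"] by simp
  qed
  from tendsto_0_le[OF Wt_minus_Zt_tendsto_0 this]
  have "((\<lambda>\<tau>. ln (gd f 1 (Wt \<tau>)) - ln (gd f 1 (Zt \<tau>))) \<longlongrightarrow> 0) at_top" .
  from tendsto_exp[OF this]
  have lim_ln: "((\<lambda>\<tau>. exp (ln (gd f 1 (Wt \<tau>)) - ln (gd f 1 (Zt \<tau>)))) \<longlongrightarrow> 1) at_top"
    by simp
  have pos: "\<forall>\<^sub>F \<tau> in at_top. gd f 1 (Wt \<tau>) > 0 \<and> gd f 1 (Zt \<tau>) > 0"
    using large by eventually_elim (use gd1_pos \<open>T > f 0\<close> in auto)
  then have "\<forall>\<^sub>F \<tau> in at_top. exp (ln (gd f 1 (Wt \<tau>)) - ln (gd f 1 (Zt \<tau>)))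
      = gd f 1 (Wt \<tau>) / gd f 1 (Zt \<tau>)"
    by eventually_elim (simp add: exp_diff)
  from tendsto_divide[OF lim_ln[unfolded tendsto_cong[OF this]] gd1_div_gd1_Zt_tendsto_1]
  have lim: "((\<lambda>\<tau>. gd f 1 (Wt \<tau>) / gd f 1 (Zt \<tau>) / (gd f 1 \<tau> / gd f 1 (Zt \<tau>))) \<longlongrightarrow> 1) at_top"
    by simp
  have "\<forall>\<^sub>F \<tau> in at_top. gd f 1 (Wt \<tau>) / gd f 1 (Zt \<tau>) / (gd f 1 \<tau> / gd f 1 (Zt \<tau>))
      = gd f 1 (Wt \<tau>) / gd f 1 \<tau>"
    using pos by eventually_elim simp
  from lim[unfolded tendsto_cong[OF this]] show ?thesis .
qed

lemma tail_approx_u_radius_eq: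
  assumes "u (radius \<tau>) > 0" and "gsum \<tau> > 0" and "gd f 1 \<tau> > 0"
  shows "tail_approx (u (radius \<tau>)) / (K * scaled_radius \<tau> powr (\<theta> / (\<beta> + 1)))
    = exp ((Zt \<tau> - Wt \<tau>) / (\<beta> + 1)) * (gd f 1 (Wt \<tau>) / gd f 1 \<tau>) / (gsum \<tau> / gd f 1 \<tau>)"
proof -
  define c where "c = \<beta> + 1"
  have "c > 0"
    using beta_plus_1_pos by (simp add: c_def)
  have "- (\<tau> + A) / c = - Zt \<tau> / c + ln (gsum \<tau>)"
    using \<open>c > 0\<close> by (simp add: Zt_eq c_def field_simps)
  then have "exp (- (\<tau> + A) / c) = exp (- Zt \<tau> / c) * exp (ln (gsum \<tau>))"
    by (simp only: exp_add)
  then have "exp (- (\<tau> + A) / c) = exp (- Zt \<tau> / c) * gsum \<tau>"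
    using assms(2) by simp
  then have "K * scaled_radius \<tau> powr (\<theta> / c) = c * exp (- Zt \<tau> / c) * gsum \<tau>"
    using K_scaled_radius_eq[of \<tau>] by (simp add: c_def)
  moreover have "tail_approx (u (radius \<tau>)) = c * exp (- Wt \<tau> / c) * gd f 1 (Wt \<tau>)"
    using tail_approx_eq[OF assms(1)] by (simp add: Wt_def c_def)
  moreover have "exp ((Zt \<tau> - Wt \<tau>) / c) = exp (- Wt \<tau> / c) / exp (- Zt \<tau> / c)"
    by (subst exp_diff[symmetric]) (simp add: diff_divide_distrib)
  ultimately show ?thesis
    using assms \<open>c > 0\<close> by (simp add: c_def)
qed

lemma Fcal_u_radius_asymp:
  "((\<lambda>\<tau>. Fcal f \<beta> (u (radius \<tau>)) / (K * scaled_radius \<tau> powr (\<theta> / (\<beta> + 1)))) \<longlongrightarrow> 1) at_top"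
proof -
  have u_pos: "\<forall>\<^sub>F \<tau> in at_top. u (radius \<tau>) > 0"
    using u_radius_at_top by (simp add: filterlim_at_top_dense)
  have "((\<lambda>\<tau>. (Zt \<tau> - Wt \<tau>) / (\<beta> + 1)) \<longlongrightarrow> 0) at_top"
    using tendsto_divide[OF tendsto_minus[OF Wt_minus_Zt_tendsto_0] tendsto_const, of "\<beta> + 1"]
      beta_plus_1_pos by simp
  from tendsto_exp[OF this]
  have exp_lim: "((\<lambda>\<tau>. exp ((Zt \<tau> - Wt \<tau>) / (\<beta> + 1))) \<longlongrightarrow> 1) at_top"
    by simp
  have "((\<lambda>\<tau>. exp ((Zt \<tau> - Wt \<tau>) / (\<beta> + 1)) * (gd f 1 (Wt \<tau>) / gd f 1 \<tau>) / (gsum \<tau> / gd f 1 \<tau>))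
      \<longlongrightarrow> 1) at_top"
    using tendsto_divide[OF tendsto_mult[OF exp_lim gd1_Wt_div_gd1_tendsto_1] gsum_div_gd1_tendsto_1]
    by simp
  moreover have "\<forall>\<^sub>F \<tau> in at_top. exp ((Zt \<tau> - Wt \<tau>) / (\<beta> + 1)) * (gd f 1 (Wt \<tau>) / gd f 1 \<tau>) / (gsum \<tau> / gd f 1 \<tau>)
      = tail_approx (u (radius \<tau>)) / (K * scaled_radius \<tau> powr (\<theta> / (\<beta> + 1)))"
    using u_pos eventually_gsum_pos eventually_gd1_pos by eventually_elim (simp add: tail_approx_u_radius_eq)
  ultimately have approx_lim:
    "((\<lambda>\<tau>. tail_approx (u (radius \<tau>)) / (K * scaled_radius \<tau> powr (\<theta> / (\<beta> + 1)))) \<longlongrightarrow> 1) at_top"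
    by (simp only: tendsto_cong)
  have "((\<lambda>\<tau>. Fcal f \<beta> (u (radius \<tau>)) / tail_approx (u (radius \<tau>))
      * (tail_approx (u (radius \<tau>)) / (K * scaled_radius \<tau> powr (\<theta> / (\<beta> + 1))))) \<longlongrightarrow> 1) at_top"
    using tendsto_mult[OF filterlim_compose[OF Fcal_div_tail_approx_tendsto_1 u_radius_at_top] approx_lim]
    by simp
  moreover have "\<forall>\<^sub>F \<tau> in at_top. Fcal f \<beta> (u (radius \<tau>)) / tail_approx (u (radius \<tau>))
      * (tail_approx (u (radius \<tau>)) / (K * scaled_radius \<tau> powr (\<theta> / (\<beta> + 1))))
      = Fcal f \<beta> (u (radius \<tau>)) / (K * scaled_radius \<tau> powr (\<theta> / (\<beta> + 1)))"
    using u_pos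
  proof eventually_elim
    case (elim \<tau>)
    then have "tail_approx (u (radius \<tau>)) \<noteq> 0"
      using tail_approx_pos by fastforce
    then show ?case
      by simp
  qed
  ultimately show ?thesis
    by (simp only: tendsto_cong)
qed

lemma u_eq_inverse_Fcal:
  "\<exists>\<delta> :: real \<Rightarrow> real. (\<delta> \<longlongrightarrow> 0) (at_right 0) \<and>
    (\<forall>\<^sub>F r in at_right 0. u (r * lam powr (- 1 / \<theta>)) =
       the_inv_into {0..} (Fcal f \<beta>) (K * r powr (\<theta> / (\<beta> + 1)) * (1 + \<delta> r)))"
proof -
  define \<tau> where "\<tau> r = ln (\<beta> + 1) - \<theta> * ln r" for r
  define \<delta> where "\<delta> r = Fcal f \<beta> (u (r * lam powr (- 1 / \<theta>))) / (K * r powr (\<theta> / (\<beta> + 1))) - 1" for r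
  have "LIM r at_right 0. ln (\<beta> + 1) + \<theta> * - ln (r::real) :> at_top"
    unfolding filterlim_tendsto_add_at_top_iff[OF tendsto_const]
    by (rule filterlim_tendsto_pos_mult_at_top[OF tendsto_const theta_pos])
      (rule filterlim_uminus_at_bot[THEN iffD1, OF ln_at_0])
  then have \<tau>_at_top: "filterlim \<tau> at_top (at_right 0)"
    by (simp add: \<tau>_def[abs_def])
  have radius_\<tau>: "scaled_radius (\<tau> r) = r" "radius (\<tau> r) = r * lam powr (- 1 / \<theta>)" if "r > 0" for r
    using that theta_pos by (simp_all add: radius_def scaled_radius_def \<tau>_def)
  have "\<forall>\<^sub>F r in at_right 0. Fcal f \<beta> (u (radius (\<tau> r))) / (K * scaled_radius (\<tau> r) powr (\<theta> / (\<beta> + 1))) - 1 = \<delta> r"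
    by (rule eventually_mono[OF eventually_at_right_less]) (simp add: \<delta>_def radius_\<tau>)
  moreover have "((\<lambda>r. Fcal f \<beta> (u (radius (\<tau> r))) / (K * scaled_radius (\<tau> r) powr (\<theta> / (\<beta> + 1))) - 1)
      \<longlongrightarrow> 1 - 1) (at_right 0)"
    by (intro tendsto_diff tendsto_const filterlim_compose[OF Fcal_u_radius_asymp \<tau>_at_top])
  ultimately have "(\<delta> \<longlongrightarrow> 0) (at_right 0)"
    by (simp add: tendsto_cong)
  moreover have "\<forall>\<^sub>F r in at_right 0. u (r * lam powr (- 1 / \<theta>)) =
       the_inv_into {0..} (Fcal f \<beta>) (K * r powr (\<theta> / (\<beta> + 1)) * (1 + \<delta> r))"
    using filterlim_compose[OF u_radius_at_top \<tau>_at_top, unfolded filterlim_at_top, rule_format, of 0]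
      eventually_at_right_less
  proof eventually_elim
    case (elim r)
    then have "u (r * lam powr (- 1 / \<theta>)) \<ge> 0"
      by (simp add: radius_\<tau>)
    moreover have "K * r powr (\<theta> / (\<beta> + 1)) * (1 + \<delta> r) = Fcal f \<beta> (u (r * lam powr (- 1 / \<theta>)))"
      using K_pos elim by (simp add: \<delta>_def)
    ultimately show ?case
      by (simp add: the_inv_into_f_f[OF inj_on_Fcal])
  qed
  ultimately show ?thesis
    by blast
qed

end

theorem mainTheorem18:
  fixes f :: "real \<Rightarrow> real" and \<alpha> \<beta> \<gamma> lam :: real and u :: "real \<Rightarrow> real"
  assumes "assumptions_A f \<alpha> \<beta> \<gamma>"
    and "singular_solution_thm11 f \<alpha> \<beta> \<gamma> lam u"
  shows "\<exists>\<delta> :: real \<Rightarrow> real. (\<delta> \<longlongrightarrow> 0) (at_right 0) \<and>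
    (\<forall>\<^sub>F r in at_right 0.
       u (r * lam powr (- 1 / theta \<alpha> \<beta> \<gamma>)) =
       the_inv_into {0..} (Fcal f \<beta>)
         ((\<beta> + 1) / theta \<alpha> \<beta> \<gamma> * (\<alpha> - \<beta> - 1) powr (- 1 / (\<beta> + 1))
           * r powr (theta \<alpha> \<beta> \<gamma> / (\<beta> + 1)) * (1 + \<delta> r)))"
proof -
  from assms(1) obtain D where "C_n_on 4 {0..} f D" and "\<forall>x\<ge>0. D 1 x > 0"
    unfolding assumptions_A_def by blast
  with assms interpret singular_solution_setting f D \<beta> \<alpha> \<gamma> lam u
    by unfold_locales (auto simp: assumptions_A_def singular_solution_thm11_def)
  from u_eq_inverse_Fcal show ?thesis
    by (simp add: K_def)
qed

end
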